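(* Let $q$ be a prime power, $u,v$ non-zero in $\mathbb{F}_q$, and write $\mathrm{Rad}(q-1)=k\,p_1\cdots p_s$ with $k$ a divisor and $p_1,\ldots,p_s$ distinct primes. Let $\delta_2=1-2\sum_{i=1}^s 1/p_i$ and $M=M_{q-1,q-1}$. Then $$M\geq \sum_{i=1}^s\{[M_{p_ik,k}-\theta(p_i)M_{k,k}]+[M_{k,p_ik}-\theta(p_i)M_{k,k}]\}+\delta_2M_{k,k}.$$
   Context: $\mathrm{Rad}(m)$ is the product of the distinct primes dividing $m$; $\theta(m)=\phi(m)/m$. For a divisor $e$ of $q-1$, a non-zero $a\in\mathbb{F}_q$ is $e$-free if $a=b^d$ with $b\in\mathbb{F}_q$, $d\mid e$ implies $d=1$ (primitive means $(q-1)$-free). For divisors $e_1,e_2$ of $q-1$, $M_{e_1,e_2}$ is the number of non-zero $a\in\mathbb{F}_q$ such that $a$ is $e_1$-free and $ua+va^{-1}$ is (non-zero and) $e_2$-free; thus $M_{q-1,q-1}$ is the number of primitive $a$ with $ua+va^{-1}$ primitive. *)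

theory Defs
  imports "HOL-Number_Theory.Number_Theory" "HOL-Library.Cardinality"
begin

definition Rad :: "nat \<Rightarrow> nat" where
  "Rad m = (\<Prod>p\<in>prime_factors m. p)"

definition theta :: "nat \<Rightarrow> real" where
  "theta m = real (totient m) / real m"

definition efree :: "nat \<Rightarrow> 'a::{finite,field} \<Rightarrow> bool" where
  "efree e a \<longleftrightarrow> a \<noteq> 0 \<and> (\<forall>b d. d dvd e \<and> a = b ^ d \<longrightarrow> d = 1)"

definition Mcount :: "'a::{finite,field} \<Rightarrow> 'a \<Rightarrow> nat \<Rightarrow> nat \<Rightarrow> nat" where
  "Mcount u v e1 e2 = card {a::'a. a \<noteq> 0 \<and> efree e1 a \<and> efree e2 (u * a + v * inverse a)}"

end

theory Submission
  imports Defs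
begin

text \<open>Sieving the elements counted by \<open>M\<^sub>k\<^sub>,\<^sub>k\<close> by the \<open>p\<close>-th powers, \<open>p \<in> P\<close>, among
  \<open>a\<close> and among \<open>u a + v a\<^sup>-\<^sup>1\<close> leaves exactly the elements counted by \<open>M\<close>, since the primes
  dividing \<open>q - 1\<close> are those of \<open>k\<close> together with \<open>P\<close>. Removing each of these \<open>2s\<close> sets
  costs at most its size, and \<open>\<theta>(p) = 1 - 1/p\<close> turns the resulting bound into the stated one.\<close>

lemma efree_iff_prime_powers:
  "efree e a \<longleftrightarrow> a \<noteq> 0 \<and> (\<forall>p. prime p \<and> p dvd e \<longrightarrow> (\<forall>b. a \<noteq> b ^ p))"
proof
  assume "efree e a"
  then show "a \<noteq> 0 \<and> (\<forall>p. prime p \<and> p dvd e \<longrightarrow> (\<forall>b. a \<noteq> b ^ p))"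
    unfolding efree_def by (metis not_prime_1)
next
  assume no_prime_power: "a \<noteq> 0 \<and> (\<forall>p. prime p \<and> p dvd e \<longrightarrow> (\<forall>b. a \<noteq> b ^ p))"
  have "d = 1" if "d dvd e" "a = b ^ d" for b d
  proof (rule ccontr)
    assume "d \<noteq> 1"
    then obtain p where p: "prime p" "p dvd d" using prime_factor_nat by blast
    then obtain m where "d = p * m" by blast
    then have "a = (b ^ m) ^ p" using that(2) by (simp add: power_mult mult.commute)
    moreover have "p dvd e" using p that(1) dvd_trans by blast
    ultimately show False using no_prime_power p by blast
  qed
  then show "efree e a" using no_prime_power unfolding efree_def by blast
qed

lemma efree_mult_prime:
  assumes "prime p"
  shows "efree (p * k) a \<longleftrightarrow> efree k a \<and> (\<forall>b. a \<noteq> b ^ p)"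
proof -
  have "q dvd p * k \<longleftrightarrow> q = p \<or> q dvd k" if "prime q" for q
    using that assms by (metis prime_dvd_mult_iff primes_dvd_imp_eq dvd_refl)
  then show ?thesis unfolding efree_iff_prime_powers using assms by blast
qed

lemma efree_by_prime_divisors:
  assumes "\<forall>p\<in>P. prime p"
    and "\<And>q. prime q \<Longrightarrow> q dvd n \<longleftrightarrow> q dvd k \<or> q \<in> P"
  shows "efree n a \<longleftrightarrow> efree k a \<and> (\<forall>p\<in>P. \<forall>b. a \<noteq> b ^ p)"
  unfolding efree_iff_prime_powers using assms by blast

lemma prime_dvd_Rad_iff:
  assumes "n > 0" "prime (p::nat)"
  shows "p dvd Rad n \<longleftrightarrow> p dvd n"
proof -
  have "p dvd Rad n \<longleftrightarrow> (\<exists>q\<in>prime_factors n. p dvd q)"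
    unfolding Rad_def using assms(2) by (simp add: prime_dvd_prod_iff)
  also have "\<dots> \<longleftrightarrow> p \<in> prime_factors n"
    using assms(2) by (metis in_prime_factors_imp_prime primes_dvd_imp_eq dvd_refl)
  also have "\<dots> \<longleftrightarrow> p dvd n" using assms by (auto simp: in_prime_factors_iff)
  finally show ?thesis .
qed

lemma prime_dvd_iff_of_Rad_eq:
  assumes "n > 0" "finite P" "\<forall>p\<in>P. prime p" "Rad n = k * (\<Prod>p\<in>P. p)" "prime q"
  shows "q dvd n \<longleftrightarrow> q dvd k \<or> q \<in> P"
proof -
  have "q dvd n \<longleftrightarrow> q dvd k * (\<Prod>p\<in>P. p)"
    using prime_dvd_Rad_iff[OF assms(1,5)] assms(4) by simp
  also have "\<dots> \<longleftrightarrow> q dvd k \<or> (\<exists>p\<in>P. q dvd p)"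
    using assms(2,5) by (simp add: prime_dvd_mult_iff prime_dvd_prod_iff)
  also have "(\<exists>p\<in>P. q dvd p) \<longleftrightarrow> q \<in> P"
    using assms(3,5) by (metis primes_dvd_imp_eq dvd_refl)
  finally show ?thesis .
qed

lemma theta_prime:
  assumes "prime p"
  shows "theta p = 1 - 1 / real p"
proof -
  have "real (totient p) = real p - 1"
    using assms prime_ge_1_nat[OF assms] by (simp add: totient_prime of_nat_diff)
  then show ?thesis
    using prime_gt_0_nat[OF assms] unfolding theta_def by (simp add: field_simps)
qed

lemma card_field_ge_2: "CARD('a::{finite,field}) \<ge> 2"
proof -
  have "card {0::'a, 1} \<le> CARD('a)" by (rule card_mono) auto
  then show ?thesis by simp
qed

definition Mset :: "'a::{finite,field} \<Rightarrow> 'a \<Rightarrow> nat \<Rightarrow> nat \<Rightarrow> 'a set" where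
  "Mset u v e1 e2 = {a. a \<noteq> 0 \<and> efree e1 a \<and> efree e2 (u * a + v * inverse a)}"

lemma Mcount_eq_card_Mset: "Mcount u v e1 e2 = card (Mset u v e1 e2)"
  unfolding Mcount_def Mset_def ..

lemma Mset_mult_prime_left:
  "prime p \<Longrightarrow> Mset u v (p * k) k = Mset u v k k - {a. \<exists>b. a = b ^ p}"
  unfolding Mset_def by (auto simp: efree_mult_prime)

lemma Mset_mult_prime_right:
  "prime p \<Longrightarrow> Mset u v k (p * k) = Mset u v k k - {a. \<exists>b. u * a + v * inverse a = b ^ p}"
  unfolding Mset_def by (auto simp: efree_mult_prime)

lemma Mset_by_prime_divisors:
  assumes "\<forall>p\<in>P. prime p"
    and "\<And>q. prime q \<Longrightarrow> q dvd n \<longleftrightarrow> q dvd k \<or> q \<in> P"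
  shows "Mset u v n n = Mset u v k k -
    (\<Union>p\<in>P. {a. \<exists>b. a = b ^ p} \<union> {a. \<exists>b. u * a + v * inverse a = b ^ p})"
  unfolding Mset_def by (auto simp: efree_by_prime_divisors[OF assms])

lemma real_card_Diff:
  "finite U \<Longrightarrow> real (card (U - Z)) = real (card U) - real (card (U \<inter> Z))"
  by (simp add: card_Diff_subset_Int of_nat_diff card_mono)

lemma sieve_two_families:
  fixes U :: "'a set" and X Y :: "'i \<Rightarrow> 'a set" and d :: "'i \<Rightarrow> real"
  assumes "finite U" "finite I"
  shows "real (card (U - (\<Union>i\<in>I. X i \<union> Y i))) \<ge>
    (\<Sum>i\<in>I. (real (card (U - X i)) - (1 - d i) * real (card U))
           + (real (card (U - Y i)) - (1 - d i) * real (card U)))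
    + (1 - 2 * (\<Sum>i\<in>I. d i)) * real (card U)"
proof -
  define c where "c = real (card U)"
  define S where "S = (\<Sum>i\<in>I. real (card (U \<inter> X i)) + real (card (U \<inter> Y i)))"
  have "card (U \<inter> (\<Union>i\<in>I. X i \<union> Y i)) \<le> (\<Sum>i\<in>I. card (U \<inter> (X i \<union> Y i)))"
    unfolding Int_UN_distrib by (rule card_UN_le[OF assms(2)])
  also have "\<dots> \<le> (\<Sum>i\<in>I. card (U \<inter> X i) + card (U \<inter> Y i))"
    by (intro sum_mono) (simp add: Int_Un_distrib card_Un_le)
  finally have "real (card (U \<inter> (\<Union>i\<in>I. X i \<union> Y i))) \<le> S"
    unfolding S_def of_nat_add[symmetric] of_nat_sum[symmetric] of_nat_le_iff .
  then have "c - S \<le> real (card (U - (\<Union>i\<in>I. X i \<union> Y i)))"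
    using real_card_Diff[OF assms(1)] unfolding c_def by simp
  moreover have "(\<Sum>i\<in>I. (real (card (U - X i)) - (1 - d i) * c)
           + (real (card (U - Y i)) - (1 - d i) * c))
      = (\<Sum>i\<in>I. 2 * c * d i - (real (card (U \<inter> X i)) + real (card (U \<inter> Y i))))"
    unfolding c_def
    by (intro sum.cong) (simp_all add: real_card_Diff[OF assms(1)] algebra_simps)
  moreover have "\<dots> = 2 * c * (\<Sum>i\<in>I. d i) - S"
    unfolding S_def by (simp add: sum_subtractf sum_distrib_left)
  ultimately show ?thesis
    unfolding c_def[symmetric] by (simp add: algebra_simps)
qed

theorem lemma6p2:
  fixes u v :: "'a::{finite,field}" and k :: nat and P :: "nat set"
  assumes "u \<noteq> 0" and "v \<noteq> 0"
    and "finite P" and "\<forall>p\<in>P. prime p"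
    and "Rad (CARD('a) - 1) = k * (\<Prod>p\<in>P. p)"
  shows "real (Mcount u v (CARD('a) - 1) (CARD('a) - 1)) \<ge>
     (\<Sum>p\<in>P. (real (Mcount u v (p * k) k) - theta p * real (Mcount u v k k))
             + (real (Mcount u v k (p * k)) - theta p * real (Mcount u v k k)))
     + (1 - 2 * (\<Sum>p\<in>P. 1 / real p)) * real (Mcount u v k k)"
proof -
  have "CARD('a) - 1 > 0" using card_field_ge_2[where 'a='a] by simp
  then have "Mset u v (CARD('a) - 1) (CARD('a) - 1) = Mset u v k k -
      (\<Union>p\<in>P. {a. \<exists>b. a = b ^ p} \<union> {a. \<exists>b. u * a + v * inverse a = b ^ p})"
    using assms(3-5) by (intro Mset_by_prime_divisors prime_dvd_iff_of_Rad_eq) auto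
  moreover have "(\<Sum>p\<in>P. (real (Mcount u v (p * k) k) - theta p * real (Mcount u v k k))
             + (real (Mcount u v k (p * k)) - theta p * real (Mcount u v k k)))
    = (\<Sum>p\<in>P. (real (card (Mset u v k k - {a. \<exists>b. a = b ^ p}))
                 - (1 - 1 / real p) * real (card (Mset u v k k)))
             + (real (card (Mset u v k k - {a. \<exists>b. u * a + v * inverse a = b ^ p}))
                 - (1 - 1 / real p) * real (card (Mset u v k k))))"
    using assms(4)
    by (intro sum.cong) (auto simp: Mcount_eq_card_Mset Mset_mult_prime_left
        Mset_mult_prime_right theta_prime)
  ultimately show ?thesis
    using sieve_two_families[OF _ assms(3), where U = "Mset u v k k"
        and X = "\<lambda>p. {a. \<exists>b. a = b ^ p}"
        and Y = "\<lambda>p. {a. \<exists>b. u * a + v * inverse a = b ^ p}" and d = "\<lambda>p. 1 / real p"]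
    by (simp add: Mcount_eq_card_Mset)
qed

end
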